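(* Let $0<p<1$, $G\sim D(n,p)$. Fix a tower vector $h=(h_1,\dots,h_s)$ of positive integers summing to $n$, and a tower decomposition $H=(H_1,\dots,H_s)$ (a partition of $\{1,\dots,n\}$ into ordered sets) with $|H_i|=h_i$. (a) $\Pr(h(G)=h) = w(h)/\sum_{h'} w(h')$, where the sum ranges over all tower vectors $h'$ (compositions of $n$) and $$w(h)=\binom{n}{h_1,\dots,h_s}\prod_{k=2}^{s}\frac{\left(1-(1-p)^{h_{k-1}}\right)^{h_k}}{(1-p)^{h_k\sum_{i=1}^{k-1}h_i}}.$$ (b) Conditional on the event that $H$ is the tower decomposition of $G$, the parent sets $\mathrm{Pa}(v)$, $v\in\{1,\dots,n\}$, are mutually independent; vertices $v\in H_1$ have $\mathrm{Pa}(v)=\emptyset$; and for $v\in H_j$ with $j\ge 2$ and $S\subseteq \bigcup_{i=1}^{j-1}H_i$, $$\Pr(\mathrm{Pa}(v)=S)=\begin{cases} C\left(\frac{p}{1-p}\right)^{|S|} & \text{if } S\cap H_{j-1}\ne\emptyset,\\ 0 & \text{otherwise,}\end{cases}$$ where $C$ is the normalizing constant (depending on $j$ and $H$), and $\Pr(\mathrm{Pa}(v)=S)=0$ for other $S$.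
   Context: $D(n,p)$ is the distribution on DAGs with vertex set $\{1,\dots,n\}$ assigning each DAG with $e$ edges probability proportional to $(p/(1-p))^e$. $\mathrm{Pa}(v)$ is the set of vertices $u$ with an edge $u\to v$; a source is a vertex with no parents. The tower decomposition of a DAG $G$ is $(H_1,\dots,H_s)$ where $H_1$ is the set of sources of $G$, $H_2$ the set of sources of $G$ with $H_1$ removed, $H_3$ the set of sources of $G$ with $H_1\cup H_2$ removed, etc., until all vertices are used; the tower vector is $h(G)=(|H_1|,\dots,|H_s|)$. $\binom{n}{h_1,\dots,h_s}$ is the multinomial coefficient. *)

theory Defs
  imports Complex_Main
begin

definition dags :: "nat \<Rightarrow> (nat \<times> nat) set set" where
  "dags n = {E. E \<subseteq> {1..n} \<times> {1..n} \<and> acyclic E}"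

definition dag_weight :: "real \<Rightarrow> (nat \<times> nat) set \<Rightarrow> real" where
  "dag_weight p E = (p / (1 - p)) ^ card E"

definition dag_prob :: "nat \<Rightarrow> real \<Rightarrow> ((nat \<times> nat) set \<Rightarrow> bool) \<Rightarrow> real" where
  "dag_prob n p P =
     (\<Sum>E\<in>{E\<in>dags n. P E}. dag_weight p E) / (\<Sum>E\<in>dags n. dag_weight p E)"

definition dag_cond_prob :: "nat \<Rightarrow> real \<Rightarrow> ((nat \<times> nat) set \<Rightarrow> bool)
    \<Rightarrow> ((nat \<times> nat) set \<Rightarrow> bool) \<Rightarrow> real" where
  "dag_cond_prob n p P Q = dag_prob n p (\<lambda>E. P E \<and> Q E) / dag_prob n p Q"

definition Pa :: "(nat \<times> nat) set \<Rightarrow> nat \<Rightarrow> nat set" where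
  "Pa E v = {u. (u, v) \<in> E}"

definition sources :: "nat set \<Rightarrow> (nat \<times> nat) set \<Rightarrow> nat set" where
  "sources V E = {v \<in> V. \<not> (\<exists>u\<in>V. (u, v) \<in> E)}"

definition is_tower :: "nat \<Rightarrow> (nat \<times> nat) set \<Rightarrow> nat set list \<Rightarrow> bool" where
  "is_tower n E Hs \<longleftrightarrow>
     (\<forall>k<length Hs. Hs ! k = sources ({1..n} - \<Union>(set (take k Hs))) E \<and> Hs ! k \<noteq> {})
     \<and> \<Union>(set Hs) = {1..n}"

definition has_tower_vector :: "nat \<Rightarrow> (nat \<times> nat) set \<Rightarrow> nat list \<Rightarrow> bool" where
  "has_tower_vector n E h \<longleftrightarrow> (\<exists>Hs. is_tower n E Hs \<and> map card Hs = h)"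

definition compositions :: "nat \<Rightarrow> nat list set" where
  "compositions n = {h. (\<forall>x\<in>set h. 0 < x) \<and> sum_list h = n}"

text \<open>Weight w(h); list indices are 0-based, so k = 1..s-1 here is k = 2..s in the paper.\<close>
definition tower_weight :: "nat \<Rightarrow> real \<Rightarrow> nat list \<Rightarrow> real" where
  "tower_weight n p h =
     (fact n / (\<Prod>i<length h. fact (h ! i))) *
     (\<Prod>k\<in>{1..<length h}.
        (1 - (1 - p) ^ (h ! (k - 1))) ^ (h ! k) / (1 - p) ^ (h ! k * sum_list (take k h)))"

end

theory Submission
  imports Defs "HOL-Library.FuncSet" "HOL-Library.Disjoint_Sets"
begin

(* A DAG has tower decomposition H = (H_1, ..., H_s) exactly when the vertices of H_1 have no
  parents and every vertex of H_j, j >= 2, has all its parents in H_1 u ... u H_(j-1) and at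
  least one of them in H_(j-1).  So the DAGs with tower decomposition H are in bijection with
  the independent choices of such an admissible parent set for every vertex, and the weight
  (p/(1-p))^|E| is the product of the weights (p/(1-p))^|Pa(v)|.  This factorisation is (b).
  With r = p/(1-p), the admissible parent sets of a vertex of H_k have total weight
  (1+r)^m - (1+r)^(m - h_(k-1)) = (1 - (1-p)^h_(k-1)) / (1-p)^m, where m = h_1 + ... + h_(k-1);
  multiplying over all vertices and by the number n!/(h_1! ... h_s!) of ordered partitions of
  {1..n} with block sizes h gives the total weight w(h) of the DAGs with tower vector h,
  which is (a). *)

lemma sum_power_card_Pow:
  fixes r :: "'a::comm_semiring_1"
  assumes "finite B"
  shows "(\<Sum>S\<in>Pow B. r ^ card S) = (1 + r) ^ card B"
proof -
  have "(1 + r) ^ card B = (\<Prod>x\<in>B. r + 1)"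
    by (simp add: add.commute)
  also have "\<dots> = (\<Sum>S\<in>Pow B. (\<Prod>x\<in>S. r) * (\<Prod>x\<in>B - S. 1))"
    by (rule prod_add[OF assms])
  finally show ?thesis
    by simp
qed

lemma sum_power_card_meeting:
  fixes r :: "'a::comm_ring_1"
  assumes "finite B" and "H \<subseteq> B"
  shows "(\<Sum>S | S \<subseteq> B \<and> S \<inter> H \<noteq> {}. r ^ card S) = (1 + r) ^ card B - (1 + r) ^ (card B - card H)"
proof -
  have "{S. S \<subseteq> B \<and> S \<inter> H \<noteq> {}} = Pow B - Pow (B - H)"
    by blast
  moreover have "(\<Sum>S\<in>Pow B - Pow (B - H). r ^ card S) = (\<Sum>S\<in>Pow B. r ^ card S) - (\<Sum>S\<in>Pow (B - H). r ^ card S)"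
    using assms by (intro sum_diff) auto
  moreover have "card (B - H) = card B - card H"
    using assms by (meson card_Diff_subset finite_subset)
  ultimately show ?thesis
    using assms by (simp add: sum_power_card_Pow)
qed

lemma Union_set_conv_UN_nth: "\<Union>(set xs) = (\<Union>i<length xs. xs ! i)"
  by (simp add: set_conv_nth image_def lessThan_def) blast

lemma disjoint_family_on_nth_Cons:
  "disjoint_family_on (\<lambda>i. (X # Xs) ! i) {..<length (X # Xs)} \<longleftrightarrow>
     disjoint_family_on (\<lambda>i. Xs ! i) {..<length Xs} \<and> X \<inter> \<Union>(set Xs) = {}"
  unfolding length_Cons lessThan_Suc_eq_insert_0 Union_set_conv_UN_nth
  by (simp add: disjoint_family_on_insert image_image disjoint_family_on_def) blast

lemma inverse_power_diff_power:
  fixes q :: "'a::field"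
  assumes "q \<noteq> 0" and "a \<le> b"
  shows "(1 / q) ^ b - (1 / q) ^ (b - a) = (1 - q ^ a) / q ^ b"
proof -
  have "q ^ b = q ^ (b - a) * q ^ a"
    using assms(2) by (simp flip: power_add)
  then show ?thesis
    using assms(1) by (simp add: power_one_over field_simps)
qed

section \<open>Ordered partitions\<close>

definition ordered_partition :: "'a set \<Rightarrow> 'a set list \<Rightarrow> bool" where
  "ordered_partition A Hs \<longleftrightarrow>
     disjoint_family_on (\<lambda>i. Hs ! i) {..<length Hs} \<and> \<Union>(set Hs) = A \<and> {} \<notin> set Hs"

definition level :: "'a set list \<Rightarrow> 'a \<Rightarrow> nat" where
  "level Hs v = (THE k. k < length Hs \<and> v \<in> Hs ! k)"

lemma ordered_partition_Nil [simp]: "ordered_partition A [] \<longleftrightarrow> A = {}"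
  by (simp add: ordered_partition_def disjoint_family_on_def eq_commute)

lemma ordered_partition_Cons:
  "ordered_partition A (X # Hs) \<longleftrightarrow> X \<noteq> {} \<and> X \<subseteq> A \<and> ordered_partition (A - X) Hs"
  unfolding ordered_partition_def disjoint_family_on_nth_Cons by auto

lemma
  assumes "ordered_partition A Hs"
  shows level_eq: "k < length Hs \<Longrightarrow> v \<in> Hs ! k \<Longrightarrow> level Hs v = k"
    and level_less_length: "v \<in> A \<Longrightarrow> level Hs v < length Hs"
    and mem_nth_level: "v \<in> A \<Longrightarrow> v \<in> Hs ! level Hs v"
proof -
  have unique: "i = k" if "i < length Hs" "k < length Hs" "v \<in> Hs ! i" "v \<in> Hs ! k" for i k v
    using assms that unfolding ordered_partition_def disjoint_family_on_def by blast
  show "k < length Hs \<Longrightarrow> v \<in> Hs ! k \<Longrightarrow> level Hs v = k" for k v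
    unfolding level_def using unique by blast
  assume "v \<in> A"
  then obtain k where "k < length Hs" "v \<in> Hs ! k"
    using assms unfolding ordered_partition_def Union_set_conv_UN_nth by blast
  moreover have "level Hs v = k"
    unfolding level_def using unique calculation by blast
  ultimately show "level Hs v < length Hs" "v \<in> Hs ! level Hs v"
    by simp_all
qed

lemma nth_eq_level:
  assumes "ordered_partition A Hs" and "k < length Hs"
  shows "Hs ! k = {v \<in> A. level Hs v = k}"
proof -
  have "Hs ! k \<subseteq> A"
    using assms nth_mem unfolding ordered_partition_def by blast
  then show ?thesis
    using level_eq[OF assms] mem_nth_level[OF assms(1)] by blast
qed

lemma Union_take_eq_level:
  assumes "ordered_partition A Hs"
  shows "\<Union>(set (take k Hs)) = {v \<in> A. level Hs v < k}"
proof -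
  have "\<Union>(set (take k Hs)) = (\<Union>i\<in>{..<length Hs} \<inter> {..<k}. Hs ! i)"
    by (auto simp: Union_set_conv_UN_nth)
  also have "\<dots> = (\<Union>i\<in>{..<length Hs} \<inter> {..<k}. {v \<in> A. level Hs v = i})"
    using nth_eq_level[OF assms] by simp
  also have "\<dots> = {v \<in> A. level Hs v < k}"
    using level_less_length[OF assms] by auto
  finally show ?thesis .
qed

lemma card_Union_take:
  assumes "ordered_partition A Hs" and "finite A"
  shows "card (\<Union>(set (take k Hs))) = sum_list (take k (map card Hs))"
  using assms
proof (induction Hs arbitrary: A k)
  case (Cons X Hs)
  show ?case
  proof (cases k)
    case (Suc k')
    have "ordered_partition (A - X) Hs" and "X \<subseteq> A"
      using Cons.prems by (simp_all add: ordered_partition_Cons)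
    moreover have "\<Union>(set (take k' Hs)) \<subseteq> A - X"
      using Union_take_eq_level[OF calculation(1)] by blast
    ultimately have "card (X \<union> \<Union>(set (take k' Hs))) = card X + card (\<Union>(set (take k' Hs)))"
      using Cons.prems(2) by (intro card_Un_disjoint) (auto dest: finite_subset)
    then show ?thesis
      using Cons.IH[of "A - X" k'] \<open>ordered_partition (A - X) Hs\<close> Cons.prems(2) by (simp add: Suc)
  qed simp
qed simp

lemma prod_level:
  assumes "ordered_partition A Hs" and "finite A"
  shows "(\<Prod>v\<in>A. f (level Hs v)) = (\<Prod>k<length Hs. f k ^ card (Hs ! k))"
proof -
  have "A = (\<Union>k<length Hs. Hs ! k)"
    using assms(1) by (simp add: ordered_partition_def Union_set_conv_UN_nth)
  moreover have "finite (Hs ! k)" if "k < length Hs" for k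
    using assms that by (simp add: nth_eq_level[OF assms(1)])
  ultimately have "(\<Prod>v\<in>A. f (level Hs v)) = (\<Prod>k<length Hs. \<Prod>v\<in>Hs ! k. f (level Hs v))"
    using assms(1) by (simp add: prod.UNION_disjoint ordered_partition_def disjoint_family_on_def)
  also have "\<dots> = (\<Prod>k<length Hs. f k ^ card (Hs ! k))"
    using level_eq[OF assms(1)] by (intro prod.cong) simp_all
  finally show ?thesis .
qed

lemma finite_ordered_partitions:
  assumes "finite A"
  shows "finite {Hs. ordered_partition A Hs \<and> map card Hs = h}"
proof (rule finite_subset)
  show "{Hs. ordered_partition A Hs \<and> map card Hs = h} \<subseteq> {Hs. set Hs \<subseteq> Pow A \<and> length Hs = length h}"
    by (auto simp: ordered_partition_def)
  show "finite {Hs. set Hs \<subseteq> Pow A \<and> length Hs = length h}"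
    using assms by (intro finite_lists_length_eq) simp
qed

lemma card_ordered_partitions:
  assumes "finite A" and "\<forall>x\<in>set h. 0 < x" and "sum_list h = card A"
  shows "real (card {Hs. ordered_partition A Hs \<and> map card Hs = h})
    = fact (card A) / (\<Prod>i<length h. fact (h ! i))"
  using assms
proof (induction h arbitrary: A)
  case Nil
  then have "{Hs. ordered_partition A Hs \<and> map card Hs = []} = {[]}"
    by auto
  then show ?case
    using Nil by simp
next
  case (Cons a h)
  let ?parts = "\<lambda>B. {Hs. ordered_partition B Hs \<and> map card Hs = h}"
  let ?firsts = "{X. X \<subseteq> A \<and> card X = a}"
  have parts_Cons: "{Hs. ordered_partition A Hs \<and> map card Hs = a # h} = (\<Union>X\<in>?firsts. (#) X ` ?parts (A - X))"
    using Cons.prems(2) by (fastforce simp: map_eq_Cons_conv ordered_partition_Cons)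
  have card_parts: "real (card ((#) X ` ?parts (A - X))) = fact (card A - a) / (\<Prod>i<length h. fact (h ! i))"
    if "X \<in> ?firsts" for X
  proof -
    have "card (A - X) = card A - a"
      using that Cons.prems(1) by (auto simp: card_Diff_subset finite_subset)
    then show ?thesis
      using Cons.IH[of "A - X"] Cons.prems by (simp add: card_image)
  qed
  have "finite ?firsts"
    using Cons.prems(1) by simp
  then have "real (card {Hs. ordered_partition A Hs \<and> map card Hs = a # h})
      = (\<Sum>X\<in>?firsts. real (card ((#) X ` ?parts (A - X))))"
    unfolding parts_Cons using Cons.prems(1)
    by (subst card_UN_disjoint) (auto simp: finite_ordered_partitions)
  also have "\<dots> = real (card A choose a) * (fact (card A - a) / (\<Prod>i<length h. fact (h ! i)))"
    using card_parts n_subsets[OF Cons.prems(1)] by simp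
  also have "\<dots> = fact (card A) / (fact a * (\<Prod>i<length h. fact (h ! i)))"
    using Cons.prems(3) by (simp add: binomial_fact)
  also have "fact a * (\<Prod>i<length h. fact (h ! i)) = (\<Prod>i<length (a # h). fact ((a # h) ! i))"
    by (simp only: length_Cons prod.lessThan_Suc_shift nth_Cons_0 nth_Cons_Suc)
  finally show ?case .
qed

section \<open>Tower decompositions\<close>

(* is_tower over an arbitrary vertex set R: removing the first layer, the sources of R, leaves a
  tower of the remaining vertices, so that towers can be handled by induction on the list. *)
definition tower_on :: "nat set \<Rightarrow> (nat \<times> nat) set \<Rightarrow> nat set list \<Rightarrow> bool" where
  "tower_on R E Hs \<longleftrightarrow>
     (\<forall>k<length Hs. Hs ! k = sources (R - \<Union>(set (take k Hs))) E \<and> Hs ! k \<noteq> {}) \<and> \<Union>(set Hs) = R"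

lemma is_tower_iff_tower_on: "is_tower n E Hs \<longleftrightarrow> tower_on {1..n} E Hs"
  unfolding is_tower_def tower_on_def ..

lemma sources_subset: "sources R E \<subseteq> R"
  by (auto simp: sources_def)

lemma sources_empty [simp]: "sources {} E = {}"
  by (simp add: sources_def)

lemma tower_on_Nil [simp]: "tower_on R E [] \<longleftrightarrow> R = {}"
  by (auto simp: tower_on_def)

lemma tower_on_Cons:
  "tower_on R E (X # Hs) \<longleftrightarrow> X = sources R E \<and> X \<noteq> {} \<and> tower_on (R - X) E Hs"
proof -
  let ?layers = "\<lambda>R. \<forall>k<length Hs. Hs ! k = sources (R - \<Union>(set (take k Hs))) E \<and> Hs ! k \<noteq> {}"
  have "R - \<Union>(set (take (Suc k) (X # Hs))) = R - X - \<Union>(set (take k Hs))" for k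
    by auto
  then have tower_Cons: "tower_on R E (X # Hs) \<longleftrightarrow>
      X = sources R E \<and> X \<noteq> {} \<and> ?layers (R - X) \<and> X \<union> \<Union>(set Hs) = R"
    unfolding tower_on_def length_Cons All_less_Suc2 by simp
  have tower_rest: "tower_on (R - X) E Hs \<longleftrightarrow> ?layers (R - X) \<and> \<Union>(set Hs) = R - X"
    by (simp add: tower_on_def)
  have "X \<union> \<Union>(set Hs) = R \<longleftrightarrow> \<Union>(set Hs) = R - X" if "X = sources R E" "?layers (R - X)"
  proof -
    have "Hs ! k \<subseteq> R - X" if "k < length Hs" for k
      using \<open>?layers (R - X)\<close> that sources_subset by blast
    then have "\<Union>(set Hs) \<subseteq> R - X"
      unfolding Union_set_conv_UN_nth by blast
    moreover have "X \<subseteq> R"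
      using \<open>X = sources R E\<close> sources_subset by blast
    ultimately show ?thesis
      by blast
  qed
  then show ?thesis
    using tower_Cons tower_rest by blast
qed

lemma tower_on_unique: "tower_on R E A \<Longrightarrow> tower_on R E B \<Longrightarrow> A = B"
proof (induction A arbitrary: R B)
  case Nil
  then show ?case
    by (cases B) (auto simp: tower_on_Cons)
next
  case (Cons X A)
  then show ?case
    by (cases B) (auto simp: tower_on_Cons)
qed

lemma tower_on_exists:
  assumes "finite R" and "wf E"
  shows "\<exists>Hs. tower_on R E Hs"
  using assms(1)
proof (induction R rule: finite_psubset_induct)
  case (psubset R)
  show ?case
  proof (cases "R = {}")
    case False
    then obtain v where "v \<in> R" "\<And>u. (u, v) \<in> E \<Longrightarrow> u \<notin> R"
      using wfE_min[OF assms(2)] by (metis equals0I)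
    then have "sources R E \<noteq> {}"
      by (auto simp: sources_def)
    moreover obtain Hs where "tower_on (R - sources R E) E Hs"
      using psubset.IH calculation sources_subset by blast
    ultimately have "tower_on R E (sources R E # Hs)"
      by (simp add: tower_on_Cons)
    then show ?thesis ..
  qed (use tower_on_Nil in blast)
qed

lemma tower_on_ordered_partition: "tower_on R E Hs \<Longrightarrow> ordered_partition R Hs"
proof (induction Hs arbitrary: R)
  case (Cons X Hs)
  then show ?case
    using sources_subset by (auto simp: tower_on_Cons ordered_partition_Cons)
qed simp

lemma tower_ordered_partition: "is_tower n E Hs \<Longrightarrow> ordered_partition {1..n} Hs"
  by (simp add: is_tower_iff_tower_on tower_on_ordered_partition)

lemma tower_unique: "is_tower n E Hs \<Longrightarrow> is_tower n E Hs' \<Longrightarrow> Hs = Hs'"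
  by (simp add: is_tower_iff_tower_on tower_on_unique)

lemma tower_exists:
  assumes "E \<in> dags n"
  shows "\<exists>Hs. is_tower n E Hs"
proof -
  have "finite E" and "acyclic E"
    using assms by (auto simp: dags_def intro: finite_subset)
  then show ?thesis
    unfolding is_tower_iff_tower_on by (intro tower_on_exists finite_acyclic_wf) simp_all
qed

section \<open>Towers through admissible parent sets\<close>

definition admissible_parents :: "'a set list \<Rightarrow> nat \<Rightarrow> 'a set set" where
  "admissible_parents Hs k =
     (if k = 0 then {{}} else {S. S \<subseteq> \<Union>(set (take k Hs)) \<and> S \<inter> Hs ! (k - 1) \<noteq> {}})"

lemma admissible_parents_iff_level:
  assumes "ordered_partition A Hs" and "k \<le> length Hs"
  shows "S \<in> admissible_parents Hs k \<longleftrightarrow>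
    S \<subseteq> A \<and> (\<forall>u\<in>S. level Hs u < k) \<and> (0 < k \<longrightarrow> (\<exists>u\<in>S. Suc (level Hs u) = k))"
proof (cases k)
  case (Suc j)
  then have "Hs ! j = {v \<in> A. level Hs v = j}"
    using nth_eq_level[OF assms(1)] assms(2) Suc by simp
  then show ?thesis
    using Suc by (auto simp: admissible_parents_def Union_take_eq_level[OF assms(1)])
qed (auto simp: admissible_parents_def)

lemma sources_iff_level:
  assumes "ordered_partition V Hs" and "E \<subseteq> V \<times> V"
  shows "v \<in> sources (V - \<Union>(set (take k Hs))) E \<longleftrightarrow>
    v \<in> V \<and> k \<le> level Hs v \<and> (\<forall>u\<in>Pa E v. level Hs u < k)"
  using assms(2) by (auto simp: sources_def Pa_def Union_take_eq_level[OF assms(1)])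

lemma tower_on_imp_admissible_parents:
  assumes P: "ordered_partition V Hs" and E: "E \<subseteq> V \<times> V"
    and tower: "tower_on V E Hs" and v: "v \<in> V"
  shows "Pa E v \<in> admissible_parents Hs (level Hs v)"
proof -
  define k where "k = level Hs v"
  have k: "k < length Hs"
    using level_less_length[OF P v] by (simp add: k_def)
  have layer: "v \<in> Hs ! j \<longleftrightarrow> v \<in> sources (V - \<Union>(set (take j Hs))) E" if "j < length Hs" for j
    using tower that by (simp add: tower_on_def)
  have below: "\<forall>u\<in>Pa E v. level Hs u < k"
    using layer[OF k] mem_nth_level[OF P v] sources_iff_level[OF P E] by (simp add: k_def)
  have "\<exists>u\<in>Pa E v. Suc (level Hs u) = k" if "0 < k"
  proof -
    have "v \<notin> Hs ! (k - 1)"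
      using nth_eq_level[OF P, of "k - 1"] k that by (auto simp: k_def)
    then have "v \<notin> sources (V - \<Union>(set (take (k - 1) Hs))) E"
      using layer[of "k - 1"] k by simp
    then obtain u where "u \<in> Pa E v" "k - 1 \<le> level Hs u"
      using sources_iff_level[OF P E, of v "k - 1"] v by (auto simp: k_def)
    then show ?thesis
      using below by force
  qed
  moreover have "Pa E v \<subseteq> V"
    using E by (auto simp: Pa_def)
  ultimately show ?thesis
    using admissible_parents_iff_level[OF P] k below by (simp add: k_def)
qed

lemma admissible_parents_subset_Pow:
  assumes "ordered_partition A Hs" and "k \<le> length Hs"
  shows "admissible_parents Hs k \<subseteq> Pow A"
  by (auto simp: admissible_parents_iff_level[OF assms])

lemma admissible_parents_imp_tower_on:
  assumes P: "ordered_partition V Hs" and E: "E \<subseteq> V \<times> V"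
    and adm: "\<forall>v\<in>V. Pa E v \<in> admissible_parents Hs (level Hs v)"
  shows "acyclic E \<and> tower_on V E Hs"
proof
  have parents_below: "\<forall>u\<in>Pa E v. level Hs u < level Hs v"
    and parent_just_below: "0 < level Hs v \<Longrightarrow> \<exists>u\<in>Pa E v. Suc (level Hs u) = level Hs v"
    if "v \<in> V" for v
  proof -
    have "Pa E v \<in> admissible_parents Hs (level Hs v)"
      using adm that by blast
    then show "\<forall>u\<in>Pa E v. level Hs u < level Hs v"
      and "0 < level Hs v \<Longrightarrow> \<exists>u\<in>Pa E v. Suc (level Hs u) = level Hs v"
      using admissible_parents_iff_level[OF P] level_less_length[OF P that] by (simp_all add: less_imp_le)
  qed
  have edge_level: "level Hs u < level Hs v" if "(u, v) \<in> E" for u v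
    using parents_below E that by (auto simp: Pa_def)
  have "level Hs u < level Hs v" if "(u, v) \<in> E\<^sup>+" for u v
    using that by (induction rule: trancl_induct) (auto dest: edge_level)
  then show "acyclic E"
    unfolding acyclic_def by blast
  have "v \<in> Hs ! k \<longleftrightarrow> v \<in> sources (V - \<Union>(set (take k Hs))) E" if k: "k < length Hs" for k v
  proof -
    have "level Hs v = k"
      if v: "v \<in> V" and ge: "k \<le> level Hs v" and below: "\<forall>u\<in>Pa E v. level Hs u < k"
    proof (rule ccontr)
      assume "level Hs v \<noteq> k"
      then obtain u where "u \<in> Pa E v" "Suc (level Hs u) = level Hs v"
        using parent_just_below[OF v] ge by auto
      then show False
        using below ge \<open>level Hs v \<noteq> k\<close> by fastforce
    qed
    then show ?thesis
      using nth_eq_level[OF P k] sources_iff_level[OF P E] parents_below by auto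
  qed
  moreover have "Hs ! k \<noteq> {}" if "k < length Hs" for k
    using P that nth_mem unfolding ordered_partition_def by metis
  ultimately show "tower_on V E Hs"
    using P by (auto simp: tower_on_def ordered_partition_def)
qed

lemma dag_tower_iff_admissible_parents:
  assumes "ordered_partition {1..n} Hs"
  shows "E \<in> dags n \<and> is_tower n E Hs \<longleftrightarrow>
    E \<subseteq> {1..n} \<times> {1..n} \<and> (\<forall>v\<in>{1..n}. Pa E v \<in> admissible_parents Hs (level Hs v))"
  using assms tower_on_imp_admissible_parents admissible_parents_imp_tower_on
  unfolding dags_def is_tower_iff_tower_on by blast

definition edges_of_parents :: "nat set \<Rightarrow> (nat \<Rightarrow> nat set) \<Rightarrow> (nat \<times> nat) set" where
  "edges_of_parents V g = {(u, v). v \<in> V \<and> u \<in> g v}"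

lemma Pa_edges_of_parents: "v \<in> V \<Longrightarrow> Pa (edges_of_parents V g) v = g v"
  by (auto simp: Pa_def edges_of_parents_def)

lemma card_edges_of_parents:
  assumes "finite V" and "\<forall>v\<in>V. finite (g v)"
  shows "card (edges_of_parents V g) = (\<Sum>v\<in>V. card (g v))"
proof -
  have "edges_of_parents V g = (\<Union>v\<in>V. (\<lambda>u. (u, v)) ` g v)"
    by (auto simp: edges_of_parents_def)
  moreover have "card (\<Union>v\<in>V. (\<lambda>u. (u, v)) ` g v) = (\<Sum>v\<in>V. card ((\<lambda>u. (u, v)) ` g v))"
    using assms by (intro card_UN_disjoint) auto
  ultimately show ?thesis
    by (simp add: card_image inj_on_def)
qed

lemma bij_betw_edges_of_parents:
  assumes "\<forall>v\<in>V. F v \<subseteq> Pow V"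
  shows "bij_betw (edges_of_parents V) (PiE V F) {E. E \<subseteq> V \<times> V \<and> (\<forall>v\<in>V. Pa E v \<in> F v)}"
proof (rule bij_betw_byWitness[where f' = "\<lambda>E. restrict (Pa E) V"])
  show "\<forall>g\<in>PiE V F. restrict (Pa (edges_of_parents V g)) V = g"
  proof
    fix g assume "g \<in> PiE V F"
    then show "restrict (Pa (edges_of_parents V g)) V = g"
      by (intro ext) (simp add: Pa_edges_of_parents PiE_def extensional_def)
  qed
  show "\<forall>E\<in>{E. E \<subseteq> V \<times> V \<and> (\<forall>v\<in>V. Pa E v \<in> F v)}. edges_of_parents V (restrict (Pa E) V) = E"
    by (auto simp: edges_of_parents_def Pa_def)
  show "edges_of_parents V ` PiE V F \<subseteq> {E. E \<subseteq> V \<times> V \<and> (\<forall>v\<in>V. Pa E v \<in> F v)}"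
  proof
    fix E assume "E \<in> edges_of_parents V ` PiE V F"
    then obtain g where g: "g \<in> PiE V F" and E: "E = edges_of_parents V g"
      by blast
    have "E \<subseteq> V \<times> V"
      using g assms unfolding E edges_of_parents_def by (auto simp: PiE_iff)
    moreover have "\<forall>v\<in>V. Pa E v \<in> F v"
      using g by (simp add: E Pa_edges_of_parents PiE_iff)
    ultimately show "E \<in> {E. E \<subseteq> V \<times> V \<and> (\<forall>v\<in>V. Pa E v \<in> F v)}"
      by blast
  qed
  show "(\<lambda>E. restrict (Pa E) V) ` {E. E \<subseteq> V \<times> V \<and> (\<forall>v\<in>V. Pa E v \<in> F v)} \<subseteq> PiE V F"
    by auto
qed

lemma sum_power_card_parents:
  fixes r :: "'a::comm_semiring_1"
  assumes "finite V" and F: "\<forall>v\<in>V. F v \<subseteq> Pow V"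
  shows "(\<Sum>E | E \<subseteq> V \<times> V \<and> (\<forall>v\<in>V. Pa E v \<in> F v). r ^ card E) = (\<Prod>v\<in>V. \<Sum>S\<in>F v. r ^ card S)"
proof -
  have "(\<Sum>E | E \<subseteq> V \<times> V \<and> (\<forall>v\<in>V. Pa E v \<in> F v). r ^ card E)
      = (\<Sum>g\<in>PiE V F. r ^ card (edges_of_parents V g))"
    using sum.reindex_bij_betw[OF bij_betw_edges_of_parents[OF F], of "\<lambda>E. r ^ card E"] by simp
  also have "\<dots> = (\<Sum>g\<in>PiE V F. \<Prod>v\<in>V. r ^ card (g v))"
  proof (intro sum.cong refl)
    fix g assume "g \<in> PiE V F"
    then have "\<forall>v\<in>V. finite (g v)"
      using assms by (meson PiE_mem PowD finite_subset subsetD)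
    then show "r ^ card (edges_of_parents V g) = (\<Prod>v\<in>V. r ^ card (g v))"
      using assms(1) by (simp add: card_edges_of_parents power_sum)
  qed
  also have "\<dots> = (\<Prod>v\<in>V. \<Sum>S\<in>F v. r ^ card S)"
    using assms by (intro prod_sum_PiE[symmetric]) (auto intro: finite_subset)
  finally show ?thesis .
qed

section \<open>The conditional law of the parent sets\<close>

lemma sum_weight_tower_parents:
  assumes "ordered_partition {1..n} Hs"
  shows "(\<Sum>E\<in>{E \<in> dags n. (\<forall>v\<in>{1..n}. Pa E v \<in> T v) \<and> is_tower n E Hs}. dag_weight p E)
    = (\<Prod>v\<in>{1..n}. \<Sum>S\<in>admissible_parents Hs (level Hs v) \<inter> T v. (p / (1 - p)) ^ card S)"
proof -
  have events: "{E \<in> dags n. (\<forall>v\<in>{1..n}. Pa E v \<in> T v) \<and> is_tower n E Hs}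
      = {E. E \<subseteq> {1..n} \<times> {1..n} \<and> (\<forall>v\<in>{1..n}. Pa E v \<in> admissible_parents Hs (level Hs v) \<inter> T v)}"
  proof (rule set_eqI)
    fix E
    show "E \<in> {E \<in> dags n. (\<forall>v\<in>{1..n}. Pa E v \<in> T v) \<and> is_tower n E Hs} \<longleftrightarrow>
      E \<in> {E. E \<subseteq> {1..n} \<times> {1..n} \<and> (\<forall>v\<in>{1..n}. Pa E v \<in> admissible_parents Hs (level Hs v) \<inter> T v)}"
      using dag_tower_iff_admissible_parents[OF assms, of E] by auto
  qed
  have "admissible_parents Hs (level Hs v) \<subseteq> Pow {1..n}" if "v \<in> {1..n}" for v
    using admissible_parents_subset_Pow[OF assms] level_less_length[OF assms that] by simp
  then have "\<forall>v\<in>{1..n}. admissible_parents Hs (level Hs v) \<inter> T v \<subseteq> Pow {1..n}"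
    by blast
  then show ?thesis
    unfolding dag_weight_def events by (rule sum_power_card_parents[rotated]) simp
qed

lemma finite_dags: "finite (dags n)"
proof (rule finite_subset)
  show "dags n \<subseteq> Pow ({1..n} \<times> {1..n})"
    by (auto simp: dags_def)
qed simp

lemma sum_weight_dags_pos:
  assumes "0 \<le> p" and "p < 1"
  shows "0 < (\<Sum>E\<in>dags n. dag_weight p E)"
proof -
  have "{} \<in> dags n"
    by (simp add: dags_def acyclic_def)
  then show ?thesis
    using assms finite_dags by (intro sum_pos2[of _ "{}"]) (auto simp: dag_weight_def)
qed

lemma dag_cond_prob_eq_ratio:
  assumes "0 \<le> p" and "p < 1"
  shows "dag_cond_prob n p P Q
    = (\<Sum>E\<in>{E \<in> dags n. P E \<and> Q E}. dag_weight p E) / (\<Sum>E\<in>{E \<in> dags n. Q E}. dag_weight p E)"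
  using sum_weight_dags_pos[OF assms, of n] unfolding dag_cond_prob_def dag_prob_def by simp

definition parent_prob :: "real \<Rightarrow> nat set list \<Rightarrow> nat \<Rightarrow> nat set set \<Rightarrow> real" where
  "parent_prob p Hs k T =
     (\<Sum>S\<in>admissible_parents Hs k \<inter> T. (p / (1 - p)) ^ card S)
     / (\<Sum>S\<in>admissible_parents Hs k. (p / (1 - p)) ^ card S)"

lemma dag_cond_prob_tower_parents:
  assumes "ordered_partition {1..n} Hs" and "0 \<le> p" and "p < 1"
  shows "dag_cond_prob n p (\<lambda>E. \<forall>v\<in>{1..n}. Pa E v \<in> T v) (\<lambda>E. is_tower n E Hs)
    = (\<Prod>v\<in>{1..n}. parent_prob p Hs (level Hs v) (T v))"
proof -
  have num: "(\<Sum>E\<in>{E \<in> dags n. (\<forall>v\<in>{1..n}. Pa E v \<in> T v) \<and> is_tower n E Hs}. dag_weight p E)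
      = (\<Prod>v\<in>{1..n}. \<Sum>S\<in>admissible_parents Hs (level Hs v) \<inter> T v. (p / (1 - p)) ^ card S)"
    by (rule sum_weight_tower_parents[OF assms(1)])
  have den: "(\<Sum>E\<in>{E \<in> dags n. is_tower n E Hs}. dag_weight p E)
      = (\<Prod>v\<in>{1..n}. \<Sum>S\<in>admissible_parents Hs (level Hs v). (p / (1 - p)) ^ card S)"
    using sum_weight_tower_parents[OF assms(1), where T = "\<lambda>_. UNIV"] by simp
  show ?thesis
    unfolding dag_cond_prob_eq_ratio[OF assms(2,3)] num den parent_prob_def prod_dividef ..
qed

lemma sum_admissible_parents_pos:
  fixes p :: real
  assumes "ordered_partition A Hs" and "finite A" and "k < length Hs" and "0 < p" and "p < 1"
  shows "0 < (\<Sum>S\<in>admissible_parents Hs k. (p / (1 - p)) ^ card S)"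
proof -
  obtain S where S: "S \<in> admissible_parents Hs k"
  proof (cases k)
    case 0
    then show ?thesis
      using that by (simp add: admissible_parents_def)
  next
    case (Suc j)
    then obtain u where "u \<in> Hs ! j"
      using assms(1,3) nth_mem unfolding ordered_partition_def by (metis Suc_lessD ex_in_conv)
    then have "{u} \<in> admissible_parents Hs k"
      using Suc assms(3) by (simp add: admissible_parents_iff_level[OF assms(1)] nth_eq_level[OF assms(1)])
    then show ?thesis
      using that by blast
  qed
  have "finite (admissible_parents Hs k)"
    using admissible_parents_subset_Pow[OF assms(1)] assms(2,3)
    by (meson finite_Pow_iff finite_subset less_imp_le)
  moreover have "0 < p / (1 - p)"
    using assms(4,5) by simp
  ultimately show ?thesis
    by (intro sum_pos2[OF _ S]) simp_all
qed

lemma parent_prob_UNIV: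
  assumes "ordered_partition A Hs" and "finite A" and "k < length Hs" and "0 < p" and "p < 1"
  shows "parent_prob p Hs k UNIV = 1"
  using sum_admissible_parents_pos[OF assms] by (simp add: parent_prob_def)

lemma parent_prob_singleton:
  "parent_prob p Hs k {S} = (if S \<in> admissible_parents Hs k
     then (p / (1 - p)) ^ card S / (\<Sum>S'\<in>admissible_parents Hs k. (p / (1 - p)) ^ card S') else 0)"
  by (simp add: parent_prob_def Int_insert_right)

lemma dag_cond_prob_parent_eq:
  assumes "ordered_partition {1..n} Hs" and "0 < p" and "p < 1" and "v \<in> {1..n}"
  shows "dag_cond_prob n p (\<lambda>E. Pa E v = S) (\<lambda>E. is_tower n E Hs) = parent_prob p Hs (level Hs v) {S}"
proof -
  let ?T = "(\<lambda>_. UNIV)(v := {S})"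
  have "(\<lambda>E. Pa E v = S) = (\<lambda>E. \<forall>w\<in>{1..n}. Pa E w \<in> ?T w)"
    using assms(4) by auto
  then have "dag_cond_prob n p (\<lambda>E. Pa E v = S) (\<lambda>E. is_tower n E Hs)
      = (\<Prod>w\<in>{1..n}. parent_prob p Hs (level Hs w) (?T w))"
    using dag_cond_prob_tower_parents[OF assms(1)] assms(2,3) by simp
  also have "\<dots> = parent_prob p Hs (level Hs v) {S} * (\<Prod>w\<in>{1..n} - {v}. parent_prob p Hs (level Hs w) UNIV)"
    using assms(4) by (simp add: prod.remove)
  also have "\<dots> = parent_prob p Hs (level Hs v) {S}"
    using parent_prob_UNIV[OF assms(1)] level_less_length[OF assms(1)] assms(2,3) by simp
  finally show ?thesis .
qed

lemma dag_cond_prob_parents_eq: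
  assumes "ordered_partition {1..n} Hs" and "0 < p" and "p < 1"
  shows "dag_cond_prob n p (\<lambda>E. \<forall>v\<in>{1..n}. Pa E v = S v) (\<lambda>E. is_tower n E Hs)
    = (\<Prod>v\<in>{1..n}. dag_cond_prob n p (\<lambda>E. Pa E v = S v) (\<lambda>E. is_tower n E Hs))"
  using dag_cond_prob_tower_parents[OF assms(1), of p "\<lambda>v. {S v}"] assms
  by (simp add: dag_cond_prob_parent_eq)

section \<open>The law of the tower vector\<close>

definition fixed_tower_weight :: "real \<Rightarrow> nat list \<Rightarrow> real" where
  "fixed_tower_weight p h =
     (\<Prod>k\<in>{1..<length h}.
        (1 - (1 - p) ^ (h ! (k - 1))) ^ (h ! k) / (1 - p) ^ (h ! k * sum_list (take k h)))"

lemma tower_weight_eq_fixed_tower_weight: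
  "tower_weight n p h = fact n / (\<Prod>i<length h. fact (h ! i)) * fixed_tower_weight p h"
  by (simp add: tower_weight_def fixed_tower_weight_def)

lemma sum_admissible_parents_eq:
  fixes p :: real
  assumes P: "ordered_partition A Hs" and "finite A" and k: "0 < k" "k < length Hs" and "p < 1"
  shows "(\<Sum>S\<in>admissible_parents Hs k. (p / (1 - p)) ^ card S)
    = (1 - (1 - p) ^ card (Hs ! (k - 1))) / (1 - p) ^ sum_list (take k (map card Hs))"
proof -
  define B where "B = \<Union>(set (take k Hs))"
  define H where "H = Hs ! (k - 1)"
  have B: "B = {v \<in> A. level Hs v < k}" and H: "H = {v \<in> A. level Hs v = k - 1}"
    using k by (simp_all add: B_def H_def Union_take_eq_level[OF P] nth_eq_level[OF P])
  then have "H \<subseteq> B" and "finite B"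
    using k \<open>finite A\<close> by auto
  moreover have "card B = sum_list (take k (map card Hs))"
    unfolding B_def using P \<open>finite A\<close> by (rule card_Union_take)
  moreover have "admissible_parents Hs k = {S. S \<subseteq> B \<and> S \<inter> H \<noteq> {}}"
    using k by (simp add: admissible_parents_def B_def H_def)
  moreover have "1 + p / (1 - p) = 1 / (1 - p)"
    using \<open>p < 1\<close> by (simp add: field_simps)
  moreover have "card H \<le> card B"
    using \<open>H \<subseteq> B\<close> \<open>finite B\<close> by (rule card_mono[rotated])
  ultimately show ?thesis
    using \<open>p < 1\<close> by (simp add: sum_power_card_meeting inverse_power_diff_power H_def)
qed

lemma sum_weight_tower:
  assumes P: "ordered_partition {1..n} Hs" and "p < 1"
  shows "(\<Sum>E\<in>{E \<in> dags n. is_tower n E Hs}. dag_weight p E) = fixed_tower_weight p (map card Hs)"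
proof -
  let ?Z = "\<lambda>k. \<Sum>S\<in>admissible_parents Hs k. (p / (1 - p)) ^ card S"
  have "(\<Sum>E\<in>{E \<in> dags n. is_tower n E Hs}. dag_weight p E) = (\<Prod>v\<in>{1..n}. ?Z (level Hs v))"
    using sum_weight_tower_parents[OF P, where T = "\<lambda>_. UNIV"] by simp
  also have "\<dots> = (\<Prod>k<length Hs. ?Z k ^ card (Hs ! k))"
    by (rule prod_level[OF P]) simp
  also have "\<dots> = (\<Prod>k\<in>{1..<length Hs}. ?Z k ^ card (Hs ! k))"
    by (rule prod.mono_neutral_right) (auto simp: admissible_parents_def)
  also have "\<dots> = fixed_tower_weight p (map card Hs)"
    unfolding fixed_tower_weight_def
  proof (rule prod.cong)
    fix k assume "k \<in> {1..<length (map card Hs)}"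
    then have "0 < k" "k < length Hs" "k - 1 < length Hs"
      by auto
    then show "?Z k ^ card (Hs ! k) = (1 - (1 - p) ^ (map card Hs ! (k - 1))) ^ (map card Hs ! k)
        / (1 - p) ^ (map card Hs ! k * sum_list (take k (map card Hs)))"
      using sum_admissible_parents_eq[OF P _ _ _ \<open>p < 1\<close>]
      by (simp add: power_divide power_mult[symmetric] mult.commute)
  qed simp
  finally show ?thesis .
qed

lemma finite_compositions: "finite (compositions n)"
proof (rule finite_subset)
  have "length h \<le> sum_list h" if "\<forall>x\<in>set h. 0 < x" for h :: "nat list"
    using that by (induction h) auto
  then show "compositions n \<subseteq> {h. set h \<subseteq> {0..n} \<and> length h \<le> n}"
    unfolding compositions_def using member_le_sum_list by fastforce
  show "finite {h. set h \<subseteq> {0..n} \<and> length h \<le> n}"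
    by (rule finite_lists_length_le) simp
qed

lemma ordered_partition_compositions:
  assumes "ordered_partition {1..n} Hs"
  shows "map card Hs \<in> compositions n"
proof -
  have "sum_list (map card Hs) = n"
    using card_Union_take[OF assms, of "length Hs"] assms by (simp add: ordered_partition_def)
  moreover have "0 < card X" if "X \<in> set Hs" for X
  proof -
    have "X \<noteq> {}" and "X \<subseteq> {1..n}"
      using assms that unfolding ordered_partition_def by auto
    then show ?thesis
      by (simp add: card_gt_0_iff finite_subset)
  qed
  ultimately show ?thesis
    by (auto simp: compositions_def)
qed

lemma sum_weight_tower_vector:
  assumes "p < 1" and h: "h \<in> compositions n"
  shows "(\<Sum>E\<in>{E \<in> dags n. has_tower_vector n E h}. dag_weight p E) = tower_weight n p h"
proof -
  let ?parts = "{Hs. ordered_partition {1..n} Hs \<and> map card Hs = h}"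
  have "{E \<in> dags n. has_tower_vector n E h} = (\<Union>Hs\<in>?parts. {E \<in> dags n. is_tower n E Hs})"
    unfolding has_tower_vector_def using tower_ordered_partition by auto
  moreover have "{E \<in> dags n. is_tower n E Hs} \<inter> {E \<in> dags n. is_tower n E Hs'} = {}" if "Hs \<noteq> Hs'" for Hs Hs'
    using tower_unique that by blast
  ultimately have "(\<Sum>E\<in>{E \<in> dags n. has_tower_vector n E h}. dag_weight p E)
      = (\<Sum>Hs\<in>?parts. \<Sum>E\<in>{E \<in> dags n. is_tower n E Hs}. dag_weight p E)"
    using finite_ordered_partitions[of "{1..n}" h] finite_dags by (simp add: sum.UNION_disjoint)
  also have "\<dots> = real (card ?parts) * fixed_tower_weight p h"
    using sum_weight_tower \<open>p < 1\<close> by simp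
  also have "\<dots> = tower_weight n p h"
    using h card_ordered_partitions[of "{1..n}" h]
    by (simp add: compositions_def tower_weight_eq_fixed_tower_weight)
  finally show ?thesis .
qed

lemma sum_weight_dags:
  assumes "p < 1"
  shows "(\<Sum>E\<in>dags n. dag_weight p E) = (\<Sum>h\<in>compositions n. tower_weight n p h)"
proof -
  have cover: "(\<Union>h\<in>compositions n. {E \<in> dags n. has_tower_vector n E h}) = dags n"
    using tower_exists tower_ordered_partition ordered_partition_compositions
    unfolding has_tower_vector_def by fast
  have "{E \<in> dags n. has_tower_vector n E h} \<inter> {E \<in> dags n. has_tower_vector n E h'} = {}"
    if "h \<noteq> h'" for h h'
    using tower_unique that unfolding has_tower_vector_def by blast
  then have "(\<Sum>E\<in>(\<Union>h\<in>compositions n. {E \<in> dags n. has_tower_vector n E h}). dag_weight p E)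
      = (\<Sum>h\<in>compositions n. \<Sum>E\<in>{E \<in> dags n. has_tower_vector n E h}. dag_weight p E)"
    using finite_compositions finite_dags by (simp add: sum.UNION_disjoint)
  then have "(\<Sum>E\<in>dags n. dag_weight p E)
      = (\<Sum>h\<in>compositions n. \<Sum>E\<in>{E \<in> dags n. has_tower_vector n E h}. dag_weight p E)"
    by (simp only: cover)
  also have "\<dots> = (\<Sum>h\<in>compositions n. tower_weight n p h)"
    using sum_weight_tower_vector[OF assms] by simp
  finally show ?thesis .
qed

theorem lemma3:
  fixes n :: nat and p :: real and h :: "nat list" and Hs :: "nat set list"
  assumes p0: "0 < p" and p1: "p < 1"
    and hpos: "\<forall>x\<in>set h. 0 < x" and hsum: "sum_list h = n"
    and Hlen: "length Hs = length h"
    and Hcard: "\<forall>i<length h. card (Hs ! i) = h ! i"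
    and Hdisj: "\<forall>i<length Hs. \<forall>k<length Hs. i \<noteq> k \<longrightarrow> Hs ! i \<inter> Hs ! k = {}"
    and Hunion: "\<Union>(set Hs) = {1..n}"
  shows
    "dag_prob n p (\<lambda>E. has_tower_vector n E h)
       = tower_weight n p h / (\<Sum>h'\<in>compositions n. tower_weight n p h')
     \<and> (\<forall>S :: nat \<Rightarrow> nat set.
          dag_cond_prob n p (\<lambda>E. \<forall>v\<in>{1..n}. Pa E v = S v) (\<lambda>E. is_tower n E Hs)
          = (\<Prod>v\<in>{1..n}. dag_cond_prob n p (\<lambda>E. Pa E v = S v) (\<lambda>E. is_tower n E Hs)))
     \<and> (\<forall>v. 0 < length Hs \<and> v \<in> Hs ! 0 \<longrightarrow> dag_cond_prob n p (\<lambda>E. Pa E v = {}) (\<lambda>E. is_tower n E Hs) = 1)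
     \<and> (\<forall>j. 1 \<le> j \<and> j < length Hs \<longrightarrow>
          (\<exists>C::real. \<forall>v\<in>Hs ! j. \<forall>S.
             dag_cond_prob n p (\<lambda>E. Pa E v = S) (\<lambda>E. is_tower n E Hs)
             = (if S \<subseteq> \<Union>(set (take j Hs)) \<and> S \<inter> Hs ! (j - 1) \<noteq> {}
                then C * (p / (1 - p)) ^ card S else 0)))"
proof -
  have "{} \<notin> set Hs"
    using hpos Hcard Hlen by (auto simp: in_set_conv_nth) (metis card.empty less_irrefl nth_mem)
  then have P: "ordered_partition {1..n} Hs"
    using Hdisj Hunion by (simp add: ordered_partition_def disjoint_family_on_def)
  have "h \<in> compositions n"
    using hpos hsum by (simp add: compositions_def)
  have layer: "v \<in> {1..n} \<and> level Hs v = j" if "j < length Hs" "v \<in> Hs ! j" for j v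
    using nth_eq_level[OF P] that by auto
  let ?Z = "\<lambda>j. \<Sum>S\<in>admissible_parents Hs j. (p / (1 - p)) ^ card S"
  show ?thesis
  proof (intro conjI allI impI)
    show "dag_prob n p (\<lambda>E. has_tower_vector n E h)
       = tower_weight n p h / (\<Sum>h'\<in>compositions n. tower_weight n p h')"
      using sum_weight_tower_vector[OF p1 \<open>h \<in> compositions n\<close>] sum_weight_dags[OF p1]
      by (simp add: dag_prob_def)
    show "dag_cond_prob n p (\<lambda>E. \<forall>v\<in>{1..n}. Pa E v = S v) (\<lambda>E. is_tower n E Hs)
        = (\<Prod>v\<in>{1..n}. dag_cond_prob n p (\<lambda>E. Pa E v = S v) (\<lambda>E. is_tower n E Hs))" for S
      by (rule dag_cond_prob_parents_eq[OF P p0 p1])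
    show "dag_cond_prob n p (\<lambda>E. Pa E v = {}) (\<lambda>E. is_tower n E Hs) = 1"
      if "0 < length Hs \<and> v \<in> Hs ! 0" for v
      using that layer[of 0 v] dag_cond_prob_parent_eq[OF P p0 p1]
      by (simp add: parent_prob_singleton admissible_parents_def)
    show "\<exists>C. \<forall>v\<in>Hs ! j. \<forall>S. dag_cond_prob n p (\<lambda>E. Pa E v = S) (\<lambda>E. is_tower n E Hs)
        = (if S \<subseteq> \<Union>(set (take j Hs)) \<and> S \<inter> Hs ! (j - 1) \<noteq> {} then C * (p / (1 - p)) ^ card S else 0)"
      if "1 \<le> j \<and> j < length Hs" for j
      using that layer[of j] dag_cond_prob_parent_eq[OF P p0 p1]
      by (intro exI[of _ "1 / ?Z j"]) (simp add: parent_prob_singleton admissible_parents_def)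
  qed
qed

end
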